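(* Let $Y$ be a topological space and $L=\mathcal{O}(Y)$ its Heyting algebra of open sets. Let $\mathfrak{X}=(X,(R_j)_{j\in J})$ be a relational structure of type $\tau$. Then there is an isomorphism of algebras of type $\tau$ (which is moreover a Heyting algebra isomorphism of the underlying lattices) $\Phi:L^{\mathfrak{X}}\to\hat{\mathfrak{X}}^+$ from the convolution algebra of $\mathfrak{X}$ over $L$ to the complex algebra of the constant relational étalé $\hat{\mathfrak{X}}$, where $\Phi(\alpha)$ is the subobject $A$ of $\hat{X}$ (an open subset of $X\times Y$) with cross sections $(\{x\}\times Y)\cap A=\{x\}\times\alpha(x)$ for each $x\in X$.
   Context: A type is a function $\tau:J\to\mathbb{N}$, $j\mapsto n_j$. A relational structure $\mathfrak{X}=(X,(R_j)_J)$ of type $\tau$ is a set $X$ with an $(n_j+1)$-ary relation $R_j\subseteq X^{n_j+1}$ for each $j$. For a complete lattice $L$, the convolution algebra $L^{\mathfrak{X}}=(L^X,(f_j)_J)$ has underlying set all functions $X\to L$ and operations $f_j(\alpha_1,\ldots,\alpha_{n_j})(x)=\bigvee\{\alpha_1(x_1)\wedge\cdots\wedge\alpha_{n_j}(x_{n_j})\mid (x_1,\ldots,x_{n_j},x)\in R_j\}$. An étalé space over $Y$ is a pair $(E,\pi)$ with $\pi:E\to Y$ a local homeomorphism; morphisms are continuous maps commuting with the projections; subobjects of $(E,\pi)$ (equivalence classes of monomorphisms into it) correspond to open subsets of $E$, and $\mathrm{Sub}(E,\pi)$ denotes the set of subobjects. Products of étalé spaces are fibered products over $Y$. The constant étalé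 $\hat{X}$ is $X\times Y$ ($X$ discrete) with projection onto $Y$; $\hat{X}^{k}$ is identified with $X^k\times Y$, and for $R\subseteq X^{k}$, $\hat{R}=R\times Y$ is a subobject of $\hat{X}^k$. The constant relational étalé of $\mathfrak{X}$ is $\hat{\mathfrak{X}}=(\hat{X},(\hat{R}_j)_J)$. For a relational étalé $\mathcal{E}=(E,\pi,(R_j)_J)$ (an étalé space with a subobject $R_j$ of $(E,\pi)^{n_j+1}$ for each $j$), its complex algebra is $\mathcal{E}^+=(\mathrm{Sub}(E,\pi),(g_j)_J)$ with $g_j(A_1,\ldots,A_{n_j})=\pi_{n_j+1}((A_1\times\cdots\times A_{n_j}\times E)\cap R_j)$, the étalé relational image (product taken as étalé product, $\pi_{n_j+1}$ the last projection). For the constant case: $(x,y)\in\hat{R}_j(A_1,\ldots,A_{n_j})$ iff there exist $x_1,\ldots,x_{n_j}$ with $(x_1,\ldots,x_{n_j},x)\in R_j$ and $(x_i,y)\in A_i$ for all $i$. *)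

theory Defs
  imports "HOL-Analysis.Analysis"
begin

text \<open>An (n j + 1)-ary relation R j is represented as a set of pairs (xs, x) with
  length xs = n j (the tuple (x_1,...,x_{n_j}, x)).\<close>

definition rel_structure :: "('j \<Rightarrow> nat) \<Rightarrow> ('j \<Rightarrow> ('x list \<times> 'x) set) \<Rightarrow> bool" where
  "rel_structure n R \<longleftrightarrow> (\<forall>j xs x. (xs, x) \<in> R j \<longrightarrow> length xs = n j)"

definition opens :: "'y topology \<Rightarrow> 'y set set" where
  "opens Y = {U. openin Y U}"

definition conv_carrier :: "'y topology \<Rightarrow> ('x \<Rightarrow> 'y set) set" where
  "conv_carrier Y = {\<alpha>. \<forall>x. openin Y (\<alpha> x)}"

text \<open>Convolution operation f_j: join (union) over tuples in R_j of the finite meet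
  (intersection inside topspace Y; the empty meet is the top element topspace Y).\<close>
definition conv_op :: "'y topology \<Rightarrow> ('j \<Rightarrow> ('x list \<times> 'x) set) \<Rightarrow> 'j
    \<Rightarrow> ('x \<Rightarrow> 'y set) list \<Rightarrow> 'x \<Rightarrow> 'y set" where
  "conv_op Y R j \<alpha>s x =
     \<Union> {topspace Y \<inter> (\<Inter>i<length xs. (\<alpha>s ! i) (xs ! i)) | xs. (xs, x) \<in> R j}"

definition const_etale_top :: "'y topology \<Rightarrow> ('x \<times> 'y) topology" where
  "const_etale_top Y = prod_topology (discrete_topology (UNIV :: 'x set)) Y"

definition etale_sub :: "'y topology \<Rightarrow> ('x \<times> 'y) set set" where
  "etale_sub Y = {A. openin (const_etale_top Y) A}"

text \<open>Operation g_j of the complex algebra of the constant relational etale: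
  the last projection of (A_1 x ... x A_n x E) \<inter> R^_j, where the product is the
  fibered product over Y (all points lie over the same y) and R^_j = R_j x Y.\<close>
definition cx_op :: "'y topology \<Rightarrow> ('j \<Rightarrow> ('x list \<times> 'x) set) \<Rightarrow> 'j
    \<Rightarrow> ('x \<times> 'y) set list \<Rightarrow> ('x \<times> 'y) set" where
  "cx_op Y R j As =
     {(x, y). y \<in> topspace Y \<and>
        (\<exists>xs. length xs = length As \<and> (xs, x) \<in> R j \<and>
              (\<forall>i<length As. (xs ! i, y) \<in> As ! i))}"

definition heyting_imp :: "'a topology \<Rightarrow> 'a set \<Rightarrow> 'a set \<Rightarrow> 'a set" where
  "heyting_imp T a b = T interior_of ((topspace T - a) \<union> b)"

definition Phi :: "('x \<Rightarrow> 'y set) \<Rightarrow> ('x \<times> 'y) set" where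
  "Phi \<alpha> = (\<Union>x. {x} \<times> \<alpha> x)"

end

theory Submission
  imports Defs
begin

text \<open>Because X is discrete, an open subset of X \<times> Y is nothing but an X-indexed family of
  open subsets of Y, namely its cross sections; Phi is the passage from the family to the set
  and cutting into cross sections is its inverse. Everything in sight is computed fibrewise
  over Y: the fibred product in the relational image of R_j \<times> Y only involves points over the
  same y, which reproduces the pointwise meets and joins of the convolution operations, and
  interiors in X \<times> Y are taken cross section by cross section, so the Heyting implications
  correspond as well.\<close>

definition cross_section :: "('x \<times> 'y) set \<Rightarrow> 'x \<Rightarrow> 'y set" where
  "cross_section U x = {y. (x, y) \<in> U}"

lemma mem_Phi [simp]: "(x, y) \<in> Phi \<alpha> \<longleftrightarrow> y \<in> \<alpha> x"
  by (auto simp: Phi_def)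

lemma cross_section_Phi [simp]: "cross_section (Phi \<alpha>) = \<alpha>"
  by (auto simp: cross_section_def)

lemma Phi_cross_section [simp]: "Phi (cross_section U) = U"
  by (auto simp: cross_section_def)

lemma inj_Phi: "inj Phi"
  by (metis cross_section_Phi injI)

lemma Phi_subset_Phi_iff: "Phi \<alpha> \<subseteq> Phi \<beta> \<longleftrightarrow> (\<forall>x. \<alpha> x \<subseteq> \<beta> x)"
  by (auto simp: Phi_def)

lemma openin_cross_section:
  assumes "openin (prod_topology X Y) U"
  shows "openin Y (cross_section U x)"
proof (subst openin_subopen, intro ballI)
  fix y assume "y \<in> cross_section U x"
  then have "(x, y) \<in> U" by (simp add: cross_section_def)
  then obtain A B where "openin Y B" "y \<in> B" "x \<in> A" "A \<times> B \<subseteq> U"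
    using assms unfolding openin_prod_topology_alt by blast
  then show "\<exists>T. openin Y T \<and> y \<in> T \<and> T \<subseteq> cross_section U x"
    by (auto simp: cross_section_def)
qed

lemma openin_prod_discrete_topology_iff:
  "openin (prod_topology (discrete_topology I) Y) U \<longleftrightarrow>
     U \<subseteq> I \<times> topspace Y \<and> (\<forall>x. openin Y (cross_section U x))"
proof
  assume U: "openin (prod_topology (discrete_topology I) Y) U"
  then have "U \<subseteq> I \<times> topspace Y"
    by (metis openin_subset topspace_discrete_topology topspace_prod_topology)
  with U show "U \<subseteq> I \<times> topspace Y \<and> (\<forall>x. openin Y (cross_section U x))"
    by (blast intro: openin_cross_section)
next
  assume U: "U \<subseteq> I \<times> topspace Y \<and> (\<forall>x. openin Y (cross_section U x))"
  then have "U = (\<Union>x\<in>I. {x} \<times> cross_section U x)"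
    by (auto simp: cross_section_def)
  moreover have "openin (prod_topology (discrete_topology I) Y) ({x} \<times> cross_section U x)"
    if "x \<in> I" for x
    using U that by (simp add: openin_prod_Times_iff)
  ultimately show "openin (prod_topology (discrete_topology I) Y) U"
    by (metis (no_types, lifting) openin_Union imageE)
qed

lemma openin_const_etale_Phi_iff:
  "openin (const_etale_top Y) (Phi \<alpha>) \<longleftrightarrow> (\<forall>x. openin Y (\<alpha> x))"
proof -
  have "Phi \<alpha> \<subseteq> UNIV \<times> topspace Y \<longleftrightarrow> (\<forall>x. \<alpha> x \<subseteq> topspace Y)"
    by (auto simp: Phi_def)
  then show ?thesis
    unfolding const_etale_top_def openin_prod_discrete_topology_iff
    by (auto dest: openin_subset)
qed

lemma bij_betw_Phi_conv_carrier: "bij_betw Phi (conv_carrier Y) (etale_sub Y)"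
proof (rule bij_betw_imageI)
  show "inj_on Phi (conv_carrier Y)"
    using inj_Phi by (rule inj_on_subset) simp
  have "U \<in> Phi ` conv_carrier Y" if "U \<in> etale_sub Y" for U
  proof (rule image_eqI)
    show "U = Phi (cross_section U)" by simp
    show "cross_section U \<in> conv_carrier Y"
      using that by (simp add: etale_sub_def conv_carrier_def const_etale_top_def
          openin_cross_section)
  qed
  then show "Phi ` conv_carrier Y = etale_sub Y"
    by (auto simp: conv_carrier_def etale_sub_def openin_const_etale_Phi_iff)
qed

lemma mem_conv_op:
  "y \<in> conv_op Y R j \<alpha>s x \<longleftrightarrow>
     y \<in> topspace Y \<and> (\<exists>xs. (xs, x) \<in> R j \<and> (\<forall>i<length xs. y \<in> (\<alpha>s ! i) (xs ! i)))"
  by (auto simp: conv_op_def)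

lemma Phi_conv_op:
  assumes "\<And>xs x. (xs, x) \<in> R j \<Longrightarrow> length xs = length \<alpha>s"
  shows "Phi (conv_op Y R j \<alpha>s) = cx_op Y R j (map Phi \<alpha>s)"
proof (intro set_eqI iffI; clarify)
  fix x y assume "(x, y) \<in> Phi (conv_op Y R j \<alpha>s)"
  then obtain xs where "y \<in> topspace Y" "(xs, x) \<in> R j" "\<forall>i<length xs. y \<in> (\<alpha>s ! i) (xs ! i)"
    by (auto simp: mem_conv_op)
  with assms show "(x, y) \<in> cx_op Y R j (map Phi \<alpha>s)"
    by (auto simp: cx_op_def)
next
  fix x y assume "(x, y) \<in> cx_op Y R j (map Phi \<alpha>s)"
  then show "(x, y) \<in> Phi (conv_op Y R j \<alpha>s)"
    by (auto simp: cx_op_def mem_conv_op)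
qed

lemma interior_of_const_etale:
  "const_etale_top Y interior_of U = Phi (\<lambda>x. Y interior_of cross_section U x)"
proof (rule interior_of_unique)
  show "Phi (\<lambda>x. Y interior_of cross_section U x) \<subseteq> U"
    using interior_of_subset by (fastforce simp: cross_section_def)
  show "openin (const_etale_top Y) (Phi (\<lambda>x. Y interior_of cross_section U x))"
    by (simp add: openin_const_etale_Phi_iff)
next
  fix V assume "V \<subseteq> U" "openin (const_etale_top Y) V"
  then have "openin Y (cross_section V x)" "cross_section V x \<subseteq> cross_section U x" for x
    by (auto simp: const_etale_top_def openin_cross_section) (auto simp: cross_section_def)
  then have "cross_section V x \<subseteq> Y interior_of cross_section U x" for x
    by (simp add: interior_of_maximal)
  then show "V \<subseteq> Phi (\<lambda>x. Y interior_of cross_section U x)"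
    using Phi_subset_Phi_iff[of "cross_section V"] by simp
qed

lemma topspace_const_etale: "topspace (const_etale_top Y) = Phi (\<lambda>x. topspace Y)"
  by (auto simp: const_etale_top_def)

lemma Phi_heyting_imp:
  "Phi (\<lambda>x. heyting_imp Y (\<alpha> x) (\<beta> x)) = heyting_imp (const_etale_top Y) (Phi \<alpha>) (Phi \<beta>)"
proof -
  have "cross_section (topspace (const_etale_top Y) - Phi \<alpha> \<union> Phi \<beta>) x
      = topspace Y - \<alpha> x \<union> \<beta> x" for x
    by (auto simp: topspace_const_etale cross_section_def)
  then show ?thesis
    by (simp add: heyting_imp_def interior_of_const_etale)
qed

theorem theorem3:
  fixes Y :: "'y topology"
    and n :: "'j \<Rightarrow> nat"
    and R :: "'j \<Rightarrow> ('x list \<times> 'x) set"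
  assumes "rel_structure n R"
  shows "bij_betw (Phi :: ('x \<Rightarrow> 'y set) \<Rightarrow> _) (conv_carrier Y) (etale_sub Y :: ('x \<times> 'y) set set)
    \<and> (\<forall>\<alpha>\<in>conv_carrier Y. \<forall>x::'x. ({x} \<times> UNIV) \<inter> Phi \<alpha> = {x} \<times> \<alpha> x)
    \<and> (\<forall>j \<alpha>s. length \<alpha>s = n j \<and> set \<alpha>s \<subseteq> conv_carrier Y \<longrightarrow>
          Phi (conv_op Y R j \<alpha>s) = cx_op Y R j (map Phi \<alpha>s))
    \<and> (\<forall>\<alpha>\<in>conv_carrier Y. \<forall>\<beta>\<in>conv_carrier Y. (\<forall>x::'x. \<alpha> x \<subseteq> \<beta> x) \<longleftrightarrow> Phi \<alpha> \<subseteq> Phi \<beta>)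
    \<and> (\<forall>\<alpha>\<in>conv_carrier Y. \<forall>\<beta>\<in>conv_carrier Y.
          Phi (\<lambda>x::'x. \<alpha> x \<inter> \<beta> x) = Phi \<alpha> \<inter> Phi \<beta>
        \<and> Phi (\<lambda>x. \<alpha> x \<union> \<beta> x) = Phi \<alpha> \<union> Phi \<beta>
        \<and> Phi (\<lambda>x. heyting_imp Y (\<alpha> x) (\<beta> x))
            = heyting_imp (const_etale_top Y) (Phi \<alpha>) (Phi \<beta>))
    \<and> Phi (\<lambda>x. topspace Y) = topspace (const_etale_top Y :: ('x \<times> 'y) topology)
    \<and> Phi (\<lambda>x. {}) = ({} :: ('x \<times> 'y) set)"
proof (intro conjI allI ballI impI)
  fix j and \<alpha>s :: "('x \<Rightarrow> 'y set) list"
  assume "length \<alpha>s = n j \<and> set \<alpha>s \<subseteq> conv_carrier Y"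
  with assms show "Phi (conv_op Y R j \<alpha>s) = cx_op Y R j (map Phi \<alpha>s)"
    by (intro Phi_conv_op) (auto simp: rel_structure_def)
qed (auto simp: bij_betw_Phi_conv_carrier Phi_subset_Phi_iff Phi_heyting_imp
    topspace_const_etale)

end
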